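(* Let $\{\mathcal{W}^\alpha_t,\ t\in[0,T],\ \alpha\in\mathcal{A}\}$ be a family of $\mathbb{F}$-adapted processes of the form $\mathcal{W}^\alpha_t=w_t(X^\alpha_t,\mathbb{E}[X^\alpha_t])$ for some $\mathbb{F}$-adapted random field $\{w_t(x,\bar x),\ t\in[0,T],\ x,\bar x\in\mathbb{R}^d\}$ satisfying $$|w_t(x,\bar x)|\le C(\chi_t+|x|^2+|\bar x|^2),\qquad t\in[0,T],\ x,\bar x\in\mathbb{R}^d,$$ for some constant $C>0$ and some nonnegative process $\chi$ with $\sup_{t\in[0,T]}\mathbb{E}[|\chi_t|]<\infty$, and such that: (i) $w_T(x,\bar x)=g(x,\bar x)$ for all $x,\bar x\in\mathbb{R}^d$; (ii) for every $\alpha\in\mathcal{A}$, the map $t\in[0,T]\mapsto\mathbb{E}[\mathcal{S}^\alpha_t]$ is nondecreasing, where $\mathcal{S}^\alpha_t=e^{-\rho t}\mathcal{W}^\alpha_t+\int_0^t e^{-\rho s}f_s(X^\alpha_s,\mathbb{E}[X^\alpha_s],\alpha_s,\mathbb{E}[\alpha_s])\,ds$; (iii) for some $\alpha^*\in\mathcal{A}$ the map $t\in[0,T]\mapsto\mathbb{E}[\mathcal{S}^{\alpha^*}_t]$ is constant. Then $\alpha^*$ is an optimal control and $V_0=\mathbb{E}[w_0(X_0,\mathbb{E}[X_0])]=J(\alpha^* )$. Moreover, any other optimal control satisfies condition (iii).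
   Context: Fix $T>0$, $\rho\ge0$, integers $d,m\ge1$. Let $(\Omega,\mathcal{F},\mathbb{F},\mathbb{P})$ be a filtered probability space with $\mathbb{F}=(\mathcal{F}_t)_{0\le t\le T}$ satisfying the usual conditions, $\mathbb{F}$ being the natural filtration of a standard real Brownian motion $W$ augmented with a $\sigma$-algebra $\mathcal{G}$ independent of $W$. The admissible controls $\mathcal{A}$ are the $\mathbb{F}$-adapted processes $\alpha:\Omega\times[0,T]\to\mathbb{R}^m$ with $\int_0^Te^{-\rho t}\mathbb{E}[|\alpha_t|^2]dt<\infty$. $X_0$ is a square-integrable $\mathcal{G}$-measurable $\mathbb{R}^d$-valued random variable. For $\alpha\in\mathcal{A}$, $X^\alpha$ is the unique strong solution of $dX_t=[\beta_t+B_tX_t+\tilde B_t\mathbb{E}[X_t]+C_t\alpha_t+\tilde C_t\mathbb{E}[\alpha_t]]dt+[\gamma_t+D_tX_t+\tilde D_t\mathbb{E}[X_t]+F_t\alpha_t+\tilde F_t\mathbb{E}[\alpha_t]]dW_t$, $X_0^\alpha=X_0$. The cost is $J(\alpha)=\mathbb{E}\big[\int_0^Te^{-\rho t}f_t(X^\alpha_t,\mathbb{E}[X^\alpha_t],\alpha_t,\mathbb{E}[\alpha_t])dt+e^{-\rho T}g(X^\alpha_T,\mathbb{E}[X^\alpha_T])\big]$ and $V_0=\inf_{\alpha\in\mathcal{A}}J(\alpha)$, where $f_t(x,\bar x,a,\bar a)=(x-\bar x)^\top Q_t(x-\bar x)+\bar x^\top(Q_t+\tilde Q_t)\bar x+2a^\top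 I_t(x-\bar x)+2\bar a^\top(I_t+\tilde I_t)\bar x+(a-\bar a)^\top N_t(a-\bar a)+\bar a^\top(N_t+\tilde N_t)\bar a+2M_t^\top x+2H_t^\top a$, $g(x,\bar x)=(x-\bar x)^\top P(x-\bar x)+\bar x^\top(P+\tilde P)\bar x+2L^\top x$. Standing assumptions: $\beta,\gamma$ are $\mathbb{F}$-adapted $\mathbb{R}^d$-valued with $\int_0^Te^{-\rho t}\mathbb{E}|\cdot|^2dt<\infty$; $B,\tilde B,D,\tilde D$ are bounded measurable $\mathbb{R}^{d\times d}$-valued functions on $[0,T]$; $C,\tilde C,F,\tilde F$ bounded measurable $\mathbb{R}^{d\times m}$-valued; $Q,\tilde Q$ bounded measurable with values in symmetric $d\times d$ matrices; $P,\tilde P$ symmetric $d\times d$; $N,\tilde N$ bounded measurable with values in symmetric $m\times m$ matrices; $I,\tilde I$ bounded measurable $\mathbb{R}^{m\times d}$-valued; $M$ (resp. $H$) is $\mathbb{F}$-adapted $\mathbb{R}^d$- (resp. $\mathbb{R}^m$-)valued with $\int_0^Te^{-\rho t}\mathbb{E}|\cdot|^2dt<\infty$; $L$ is an $\mathcal{F}_T$-measurable square-integrable $\mathbb{R}^d$-valued random variable; there is $\delta>0$ such that for all $t$: $N_t\ge\delta\mathbb{I}_m$, $P\ge0$, $Q_t-I_t^\top N_t^{-1}I_t\ge0$, $N_t+\tilde N_t\ge\delta\mathbb{I}_m$, $P+\tilde P\ge0$, $(Q_t+\tilde Q_t)-(I_t+\tilde I_t)^\top(N_t+\tilde N_t)^{-1}(I_t+\tilde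 I_t)\ge0$. *)

theory Defs
  imports "HOL-Probability.Probability"
begin

definition is_filtration :: "'a measure \<Rightarrow> real \<Rightarrow> (real \<Rightarrow> 'a measure) \<Rightarrow> bool" where
  "is_filtration M T F \<longleftrightarrow>
     (\<forall>t\<in>{0..T}. subalgebra M (F t)) \<and>
     (\<forall>s t. 0 \<le> s \<longrightarrow> s \<le> t \<longrightarrow> t \<le> T \<longrightarrow> sets (F s) \<subseteq> sets (F t))"

definition adapted :: "(real \<Rightarrow> 'a measure) \<Rightarrow> real \<Rightarrow> (real \<Rightarrow> 'a \<Rightarrow> 'b::topological_space) \<Rightarrow> bool" where
  "adapted F T Y \<longleftrightarrow> (\<forall>t\<in>{0..T}. Y t \<in> borel_measurable (F t))"

definition admissible ::
  "'a measure \<Rightarrow> (real \<Rightarrow> 'a measure) \<Rightarrow> real \<Rightarrow> real \<Rightarrow> (real \<Rightarrow> 'a \<Rightarrow> real^'m) \<Rightarrow> bool" where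
  "admissible M F T \<rho> \<alpha> \<longleftrightarrow>
     adapted F T \<alpha> \<and>
     (\<lambda>(t,\<omega>). \<alpha> t \<omega>) \<in> borel_measurable (restrict_space lborel {0..T} \<Otimes>\<^sub>M M) \<and>
     (\<integral>\<^sup>+t. indicator {0..T} t * (\<integral>\<^sup>+\<omega>. ennreal (exp (-\<rho>*t) * (norm (\<alpha> t \<omega>))\<^sup>2) \<partial>M) \<partial>lborel) < \<infinity>"

definition psd :: "real^'n^'n \<Rightarrow> bool" where
  "psd A \<longleftrightarrow> (\<forall>x. 0 \<le> x \<bullet> (A *v x))"

definition ge_delta :: "real^'n^'n \<Rightarrow> real \<Rightarrow> bool" where
  "ge_delta A \<delta> \<longleftrightarrow> (\<forall>x. \<delta> * (norm x)\<^sup>2 \<le> x \<bullet> (A *v x))"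

definition symmetric_mat :: "real^'n^'n \<Rightarrow> bool" where
  "symmetric_mat A \<longleftrightarrow> transpose A = A"

definition bounded_fun :: "real \<Rightarrow> (real \<Rightarrow> 'b::real_normed_vector) \<Rightarrow> bool" where
  "bounded_fun T A \<longleftrightarrow> (\<exists>K. \<forall>t\<in>{0..T}. norm (A t) \<le> K)"

definition fcost ::
  "(real \<Rightarrow> real^'d^'d) \<Rightarrow> (real \<Rightarrow> real^'d^'d) \<Rightarrow> (real \<Rightarrow> real^'d^'m) \<Rightarrow> (real \<Rightarrow> real^'d^'m)
   \<Rightarrow> (real \<Rightarrow> real^'m^'m) \<Rightarrow> (real \<Rightarrow> real^'m^'m) \<Rightarrow> (real \<Rightarrow> 'a \<Rightarrow> real^'d) \<Rightarrow> (real \<Rightarrow> 'a \<Rightarrow> real^'m)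
   \<Rightarrow> real \<Rightarrow> 'a \<Rightarrow> real^'d \<Rightarrow> real^'d \<Rightarrow> real^'m \<Rightarrow> real^'m \<Rightarrow> real" where
  "fcost Q Qt I It N Nt Mc H t \<omega> x xb a ab =
     (x - xb) \<bullet> (Q t *v (x - xb)) + xb \<bullet> ((Q t + Qt t) *v xb)
     + 2 * (a \<bullet> (I t *v (x - xb))) + 2 * (ab \<bullet> ((I t + It t) *v xb))
     + (a - ab) \<bullet> (N t *v (a - ab)) + ab \<bullet> ((N t + Nt t) *v ab)
     + 2 * (Mc t \<omega> \<bullet> x) + 2 * (H t \<omega> \<bullet> a)"

definition gcost ::
  "real^'d^'d \<Rightarrow> real^'d^'d \<Rightarrow> ('a \<Rightarrow> real^'d) \<Rightarrow> 'a \<Rightarrow> real^'d \<Rightarrow> real^'d \<Rightarrow> real" where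
  "gcost P Pt L \<omega> x xb =
     (x - xb) \<bullet> (P *v (x - xb)) + xb \<bullet> ((P + Pt) *v xb) + 2 * (L \<omega> \<bullet> x)"

definition L2_process ::
  "'a measure \<Rightarrow> (real \<Rightarrow> 'a measure) \<Rightarrow> real \<Rightarrow> real \<Rightarrow> (real \<Rightarrow> 'a \<Rightarrow> real^'n) \<Rightarrow> bool" where
  "L2_process M F T \<rho> Y \<longleftrightarrow>
     adapted F T Y \<and>
     (\<lambda>(t,\<omega>). Y t \<omega>) \<in> borel_measurable (restrict_space lborel {0..T} \<Otimes>\<^sub>M M) \<and>
     (\<integral>\<^sup>+t. indicator {0..T} t * (\<integral>\<^sup>+\<omega>. ennreal (exp (-\<rho>*t) * (norm (Y t \<omega>))\<^sup>2) \<partial>M) \<partial>lborel) < \<infinity>"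

end

theory Submission
  imports Defs
begin

text \<open>A verification argument: the candidate value
  \<open>E[S\<^sup>\<alpha>\<^sub>t]\<close> starts at \<open>E[w\<^sub>0(X\<^sub>0, E X\<^sub>0)]\<close> for every control (the running cost
  integral is empty and \<open>X\<^sup>\<alpha>\<^sub>0 = X\<^sub>0\<close>) and ends at \<open>J(\<alpha>)\<close> (by (i)). Monotonicity
  (ii) makes it a lower bound for every \<open>J(\<alpha>)\<close>, attained by \<open>\<alpha>\<^sup>*\<close> by (iii); for an optimal
  \<alpha> both endpoints coincide, so a nondecreasing function is squeezed to a constant.
  Only (i)--(iii) and \<open>X\<^sup>\<alpha>\<^sub>0 = X\<^sub>0\<close> are used; the growth bound on \<open>w\<close> and the
  standing assumptions on the coefficients only serve to make the expectations meaningful.\<close>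

lemma set_integral_lborel_point:
  fixes g :: "real \<Rightarrow> 'b::{banach, second_countable_topology}"
  shows "set_lebesgue_integral lborel {a..a} g = 0"
  unfolding set_lebesgue_integral_def
  by (rule integral_eq_zero_AE, rule eventually_mono[OF AE_lborel_singleton[of a]]) auto

lemma mono_on_const_if_endpoints_eq:
  fixes f :: "'a::order \<Rightarrow> 'b::order"
  assumes mono: "mono_on {a..b} f" and ends: "f a = f b" and s: "s \<in> {a..b}"
  shows "f s = f a"
proof -
  have ab: "a \<in> {a..b}" "b \<in> {a..b}" using s by auto
  have "f a \<le> f s" using mono_onD[OF mono ab(1) s] s by simp
  moreover have "f s \<le> f b" using mono_onD[OF mono s ab(2)] s by simp
  ultimately show ?thesis using ends by (metis order.antisym)
qed

lemma INF_eq_if_attained_lower_bound: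
  fixes J :: "'c \<Rightarrow> real"
  assumes lower: "\<And>x. x \<in> A \<Longrightarrow> v \<le> J x" and "y \<in> A" "J y = v"
  shows "(INF x\<in>A. J x) = v"
proof (rule order.antisym)
  show "(INF x\<in>A. J x) \<le> v"
    using cINF_lower[of J A y] assms by (auto simp: bdd_below_def)
  show "v \<le> (INF x\<in>A. J x)"
    using assms by (intro cINF_greatest) auto
qed

theorem lemma2p2:
  fixes M :: "'a measure" and F :: "real \<Rightarrow> 'a measure"
    and T \<rho> \<delta> C :: real
    and X0 :: "'a \<Rightarrow> real^'d"
    and X :: "(real \<Rightarrow> 'a \<Rightarrow> real^'m) \<Rightarrow> real \<Rightarrow> 'a \<Rightarrow> real^'d"
    and Q Qt :: "real \<Rightarrow> real^'d^'d" and I It :: "real \<Rightarrow> real^'d^'m"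
    and N Nt :: "real \<Rightarrow> real^'m^'m"
    and Mc :: "real \<Rightarrow> 'a \<Rightarrow> real^'d" and H :: "real \<Rightarrow> 'a \<Rightarrow> real^'m"
    and P Pt :: "real^'d^'d" and L :: "'a \<Rightarrow> real^'d"
    and w :: "real \<Rightarrow> 'a \<Rightarrow> real^'d \<Rightarrow> real^'d \<Rightarrow> real"
    and chi :: "real \<Rightarrow> 'a \<Rightarrow> real"
    and \<alpha>s :: "real \<Rightarrow> 'a \<Rightarrow> real^'m"
    and J :: "(real \<Rightarrow> 'a \<Rightarrow> real^'m) \<Rightarrow> real"
    and ES :: "(real \<Rightarrow> 'a \<Rightarrow> real^'m) \<Rightarrow> real \<Rightarrow> real"
    and V0 :: real
    and \<A> :: "(real \<Rightarrow> 'a \<Rightarrow> real^'m) set"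
  defines "\<A> \<equiv> {\<alpha>. admissible M F T \<rho> \<alpha>}"
  defines "J \<equiv> (\<lambda>\<alpha>. \<integral>\<omega>.
      (set_lebesgue_integral lborel {0..T} (\<lambda>u. exp (-\<rho>*u) *
          fcost Q Qt I It N Nt Mc H u \<omega> (X \<alpha> u \<omega>) (\<integral>\<omega>'. X \<alpha> u \<omega>' \<partial>M)
                (\<alpha> u \<omega>) (\<integral>\<omega>'. \<alpha> u \<omega>' \<partial>M)))
      + exp (-\<rho>*T) * gcost P Pt L \<omega> (X \<alpha> T \<omega>) (\<integral>\<omega>'. X \<alpha> T \<omega>' \<partial>M) \<partial>M)"
  defines "V0 \<equiv> (INF \<alpha>\<in>\<A>. J \<alpha>)"
  defines "ES \<equiv> (\<lambda>\<alpha> t. \<integral>\<omega>.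
      exp (-\<rho>*t) * w t \<omega> (X \<alpha> t \<omega>) (\<integral>\<omega>'. X \<alpha> t \<omega>' \<partial>M)
      + (set_lebesgue_integral lborel {0..t} (\<lambda>u. exp (-\<rho>*u) *
          fcost Q Qt I It N Nt Mc H u \<omega> (X \<alpha> u \<omega>) (\<integral>\<omega>'. X \<alpha> u \<omega>' \<partial>M)
                (\<alpha> u \<omega>) (\<integral>\<omega>'. \<alpha> u \<omega>' \<partial>M))) \<partial>M)"
  \<comment> \<open>probability space, time horizon, discount, filtration\<close>
  assumes prob: "prob_space M"
    and T_pos: "0 < T" and rho_nonneg: "0 \<le> \<rho>"
    and filt: "is_filtration M T F"
  \<comment> \<open>initial condition\<close>
    and X0_meas: "X0 \<in> borel_measurable (F 0)"
    and X0_sq: "integrable M (\<lambda>\<omega>. (norm (X0 \<omega>))\<^sup>2)"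
  \<comment> \<open>properties of the (strong) state solution X^alpha for admissible alpha\<close>
    and X_init: "\<And>\<alpha> \<omega>. \<alpha> \<in> \<A> \<Longrightarrow> \<omega> \<in> space M \<Longrightarrow> X \<alpha> 0 \<omega> = X0 \<omega>"
    and X_adapted: "\<And>\<alpha>. \<alpha> \<in> \<A> \<Longrightarrow> adapted F T (X \<alpha>)"
    and X_sq: "\<And>\<alpha> t. \<alpha> \<in> \<A> \<Longrightarrow> t \<in> {0..T} \<Longrightarrow> integrable M (\<lambda>\<omega>. (norm (X \<alpha> t \<omega>))\<^sup>2)"
    and X_sup: "\<And>\<alpha>. \<alpha> \<in> \<A> \<Longrightarrow> bdd_above ((\<lambda>t. \<integral>\<omega>. (norm (X \<alpha> t \<omega>))\<^sup>2 \<partial>M) ` {0..T})"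
  \<comment> \<open>standing assumptions on the cost coefficients\<close>
    and Q_sym: "\<And>t. t \<in> {0..T} \<Longrightarrow> symmetric_mat (Q t) \<and> symmetric_mat (Qt t)"
    and N_sym: "\<And>t. t \<in> {0..T} \<Longrightarrow> symmetric_mat (N t) \<and> symmetric_mat (Nt t)"
    and P_sym: "symmetric_mat P" "symmetric_mat Pt"
    and coef_bdd: "bounded_fun T Q" "bounded_fun T Qt" "bounded_fun T N" "bounded_fun T Nt"
                  "bounded_fun T I" "bounded_fun T It"
    and coef_meas: "Q \<in> borel_measurable lborel" "Qt \<in> borel_measurable lborel"
                   "N \<in> borel_measurable lborel" "Nt \<in> borel_measurable lborel"
                   "I \<in> borel_measurable lborel" "It \<in> borel_measurable lborel"
    and MH: "L2_process M F T \<rho> Mc" "L2_process M F T \<rho> H"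
    and L_meas: "L \<in> borel_measurable (F T)"
    and L_sq: "integrable M (\<lambda>\<omega>. (norm (L \<omega>))\<^sup>2)"
    and delta_pos: "0 < \<delta>"
    and N_pos: "\<And>t. t \<in> {0..T} \<Longrightarrow> ge_delta (N t) \<delta>"
    and P_psd: "psd P"
    and Q_psd: "\<And>t. t \<in> {0..T} \<Longrightarrow> psd (Q t - transpose (I t) ** matrix_inv (N t) ** I t)"
    and NNt_pos: "\<And>t. t \<in> {0..T} \<Longrightarrow> ge_delta (N t + Nt t) \<delta>"
    and PPt_psd: "psd (P + Pt)"
    and QQt_psd: "\<And>t. t \<in> {0..T} \<Longrightarrow>
        psd ((Q t + Qt t) - transpose (I t + It t) ** matrix_inv (N t + Nt t) ** (I t + It t))"
  \<comment> \<open>the random field w\<close>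
    and w_adapted: "\<And>t x xb. t \<in> {0..T} \<Longrightarrow> (\<lambda>\<omega>. w t \<omega> x xb) \<in> borel_measurable (F t)"
    and C_pos: "0 < C"
    and chi_nonneg: "\<And>t \<omega>. t \<in> {0..T} \<Longrightarrow> \<omega> \<in> space M \<Longrightarrow> 0 \<le> chi t \<omega>"
    and chi_meas: "\<And>t. t \<in> {0..T} \<Longrightarrow> chi t \<in> borel_measurable M"
    and chi_bdd: "\<exists>K::real. \<forall>t\<in>{0..T}. (\<integral>\<^sup>+\<omega>. ennreal \<bar>chi t \<omega>\<bar> \<partial>M) \<le> ennreal K"
    and w_growth: "\<And>t \<omega> x xb. t \<in> {0..T} \<Longrightarrow> \<omega> \<in> space M \<Longrightarrow>
        \<bar>w t \<omega> x xb\<bar> \<le> C * (chi t \<omega> + (norm x)\<^sup>2 + (norm xb)\<^sup>2)"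
  \<comment> \<open>(i), (ii), (iii)\<close>
    and cond_i: "\<And>\<omega> x xb. \<omega> \<in> space M \<Longrightarrow> w T \<omega> x xb = gcost P Pt L \<omega> x xb"
    and cond_ii: "\<And>\<alpha>. \<alpha> \<in> \<A> \<Longrightarrow> mono_on {0..T} (ES \<alpha>)"
    and as_adm: "\<alpha>s \<in> \<A>"
    and cond_iii: "\<And>s t. s \<in> {0..T} \<Longrightarrow> t \<in> {0..T} \<Longrightarrow> ES \<alpha>s s = ES \<alpha>s t"
  shows "J \<alpha>s = V0 \<and> V0 = (\<integral>\<omega>. w 0 \<omega> (X0 \<omega>) (\<integral>\<omega>'. X0 \<omega>' \<partial>M) \<partial>M)
         \<and> (\<forall>\<alpha>\<in>\<A>. J \<alpha> = V0 \<longrightarrow> (\<forall>s\<in>{0..T}. \<forall>t\<in>{0..T}. ES \<alpha> s = ES \<alpha> t))"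
proof -
  define W0 where "W0 = (\<integral>\<omega>. w 0 \<omega> (X0 \<omega>) (\<integral>\<omega>'. X0 \<omega>' \<partial>M) \<partial>M)"
  have ES_start: "ES \<alpha> 0 = W0" if "\<alpha> \<in> \<A>" for \<alpha>
  proof -
    have "(\<integral>\<omega>'. X \<alpha> 0 \<omega>' \<partial>M) = (\<integral>\<omega>'. X0 \<omega>' \<partial>M)"
      by (rule Bochner_Integration.integral_cong) (auto simp: X_init[OF that])
    then show ?thesis unfolding ES_def W0_def set_integral_lborel_point
      by (intro Bochner_Integration.integral_cong) (auto simp: X_init[OF that])
  qed
  have ES_final: "ES \<alpha> T = J \<alpha>" for \<alpha>
    unfolding ES_def J_def by (rule Bochner_Integration.integral_cong) (auto simp: cond_i)
  have T_bounds: "0 \<in> {0..T}" "T \<in> {0..T}" using T_pos by auto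
  have lower: "W0 \<le> J \<alpha>" if "\<alpha> \<in> \<A>" for \<alpha>
    using mono_onD[OF cond_ii[OF that] T_bounds less_imp_le[OF T_pos]] ES_start[OF that]
      ES_final[of \<alpha>] by linarith
  have attained: "J \<alpha>s = W0"
    using cond_iii[OF T_bounds] ES_start[OF as_adm] ES_final[of \<alpha>s] by linarith
  have V0_eq: "V0 = W0"
    unfolding V0_def
    by (rule INF_eq_if_attained_lower_bound[where A = \<A> and v = W0 and J = J and y = \<alpha>s,
          OF lower as_adm attained])
  have optimal_constant: "ES \<alpha> s = ES \<alpha> t"
    if "\<alpha> \<in> \<A>" "J \<alpha> = V0" "s \<in> {0..T}" "t \<in> {0..T}" for \<alpha> s t
  proof -
    have ends: "ES \<alpha> 0 = ES \<alpha> T"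
      using ES_start[OF that(1)] ES_final[of \<alpha>] that(2) V0_eq by linarith
    have "ES \<alpha> s = ES \<alpha> 0" "ES \<alpha> t = ES \<alpha> 0"
      using mono_on_const_if_endpoints_eq[OF cond_ii[OF that(1)] ends] that(3,4) by blast+
    then show ?thesis by simp
  qed
  have "J \<alpha>s = V0" using attained V0_eq by simp
  moreover have "V0 = (\<integral>\<omega>. w 0 \<omega> (X0 \<omega>) (\<integral>\<omega>'. X0 \<omega>' \<partial>M) \<partial>M)"
    using V0_eq by (simp only: W0_def)
  ultimately show ?thesis using optimal_constant by blast
qed

end
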